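(* For a simplicial set $S$, the conjunction of all Kan conditions $\mathrm{Kan}_p[n]$ for $1\le n\le 2$, $0\le p\le n$, is equivalent to the conjunction of all Beck–Chevalley conditions $\mathrm{BC}_{p,q}[n]$ for $n\le 2$ (that is, $\mathrm{BC}_{0,1}[2]$, $\mathrm{BC}_{0,2}[2]$, $\mathrm{BC}_{1,2}[2]$).
   Context: The Kan condition $\mathrm{Kan}_p[n]$ ($n>0$, $0\le p\le n$) on $S$: for any $(n-1)$-simplices $c_0,\dots,c_{p-1},c_{p+1},\dots,c_n$ of $S$ with $d_ic_j=d_{j-1}c_i$ for all $0\le i<j\le n$ with $p\notin\{i,j\}$, there exists an $n$-simplex $x$ with $d_ix=c_i$ for all $i\ne p$. The Beck–Chevalley condition $\mathrm{BC}_{p,q}[n]$ ($n>1$, $0\le p<q\le n$): for any $(n-1)$-simplices $c_p,c_q$ of $S$ with $d_pc_q=d_{q-1}c_p$ there exists an $n$-simplex $x$ with $d_px=c_p$ and $d_qx=c_q$. *)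

theory Defs
  imports Main
begin

definition simplicial_set ::
  "(nat \<Rightarrow> 'a set) \<Rightarrow> (nat \<Rightarrow> nat \<Rightarrow> 'a \<Rightarrow> 'a) \<Rightarrow> (nat \<Rightarrow> nat \<Rightarrow> 'a \<Rightarrow> 'a) \<Rightarrow> bool" where
  "simplicial_set X d s \<longleftrightarrow>
     (\<forall>n i x. 0 < n \<and> i \<le> n \<and> x \<in> X n \<longrightarrow> d n i x \<in> X (n - 1)) \<and>
     (\<forall>n i x. i \<le> n \<and> x \<in> X n \<longrightarrow> s n i x \<in> X (Suc n)) \<and>
     (\<forall>n i j x. 2 \<le> n \<and> i < j \<and> j \<le> n \<and> x \<in> X n \<longrightarrow>
        d (n - 1) i (d n j x) = d (n - 1) (j - 1) (d n i x)) \<and>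
     (\<forall>n i j x. i < j \<and> j \<le> n \<and> x \<in> X n \<longrightarrow>
        d (Suc n) i (s n j x) = s (n - 1) (j - 1) (d n i x)) \<and>
     (\<forall>n j x. j \<le> n \<and> x \<in> X n \<longrightarrow> d (Suc n) j (s n j x) = x) \<and>
     (\<forall>n j x. j \<le> n \<and> x \<in> X n \<longrightarrow> d (Suc n) (Suc j) (s n j x) = x) \<and>
     (\<forall>n i j x. Suc j < i \<and> i \<le> Suc n \<and> x \<in> X n \<longrightarrow>
        d (Suc n) i (s n j x) = s (n - 1) j (d n (i - 1) x)) \<and>
     (\<forall>n i j x. i \<le> j \<and> j \<le> n \<and> x \<in> X n \<longrightarrow>
        s (Suc n) i (s n j x) = s (Suc n) (Suc j) (s n i x))"

definition Kan_cond ::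
  "(nat \<Rightarrow> 'a set) \<Rightarrow> (nat \<Rightarrow> nat \<Rightarrow> 'a \<Rightarrow> 'a) \<Rightarrow> nat \<Rightarrow> nat \<Rightarrow> bool" where
  "Kan_cond X d p n \<longleftrightarrow>
     (\<forall>c :: nat \<Rightarrow> 'a.
        (\<forall>i\<le>n. i \<noteq> p \<longrightarrow> c i \<in> X (n - 1)) \<and>
        (\<forall>i j. i < j \<and> j \<le> n \<and> i \<noteq> p \<and> j \<noteq> p \<longrightarrow>
            d (n - 1) i (c j) = d (n - 1) (j - 1) (c i))
        \<longrightarrow> (\<exists>x \<in> X n. \<forall>i\<le>n. i \<noteq> p \<longrightarrow> d n i x = c i))"

definition BC_cond ::
  "(nat \<Rightarrow> 'a set) \<Rightarrow> (nat \<Rightarrow> nat \<Rightarrow> 'a \<Rightarrow> 'a) \<Rightarrow> nat \<Rightarrow> nat \<Rightarrow> nat \<Rightarrow> bool" where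
  "BC_cond X d p q n \<longleftrightarrow>
     (\<forall>cp \<in> X (n - 1). \<forall>cq \<in> X (n - 1).
        d (n - 1) p cq = d (n - 1) (q - 1) cp \<longrightarrow>
        (\<exists>x \<in> X n. d n p x = cp \<and> d n q x = cq))"

end

theory Submission
  imports Defs
begin

text \<open>A 1-dimensional horn is a single vertex v, filled by the degenerate edge s_0 v.
  A 2-dimensional horn missing the face p consists of the two remaining faces c_i, c_j
  (i < j) subject to the single compatibility d_i c_j = d_(j-1) c_i, so filling it is
  literally the Beck--Chevalley condition BC_(i,j)[2].\<close>

lemma simplicial_set_degeneracy_closed:
  assumes "simplicial_set X d s" "j \<le> n" "x \<in> X n"
  shows "s n j x \<in> X (Suc n)"
  using assms unfolding simplicial_set_def by simp

lemma simplicial_set_face_degeneracy: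
  assumes "simplicial_set X d s" "j \<le> n" "x \<in> X n"
  shows "d (Suc n) j (s n j x) = x"
  using assms unfolding simplicial_set_def by simp

lemma simplicial_set_face_Suc_degeneracy:
  assumes "simplicial_set X d s" "j \<le> n" "x \<in> X n"
  shows "d (Suc n) (Suc j) (s n j x) = x"
  using assms unfolding simplicial_set_def by simp

lemma Kan_cond_dim1:
  assumes "simplicial_set X d s" "p \<le> 1"
  shows "Kan_cond X d p 1"
  unfolding Kan_cond_def
proof (intro allI impI)
  fix c :: "nat \<Rightarrow> _"
  assume "(\<forall>i\<le>1. i \<noteq> p \<longrightarrow> c i \<in> X (1 - 1)) \<and>
    (\<forall>i j. i < j \<and> j \<le> 1 \<and> i \<noteq> p \<and> j \<noteq> p \<longrightarrow> d (1 - 1) i (c j) = d (1 - 1) (j - 1) (c i))"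
  then have v: "c (1 - p) \<in> X 0"
    using assms(2) by (cases p) auto
  have "s 0 0 (c (1 - p)) \<in> X 1"
    using simplicial_set_degeneracy_closed[OF assms(1) _ v] by simp
  moreover have "d 1 i (s 0 0 (c (1 - p))) = c i" if "i \<le> 1" "i \<noteq> p" for i
  proof -
    have "d 1 i (s 0 0 (c (1 - p))) = c (1 - p)"
      using that(1) simplicial_set_face_degeneracy[OF assms(1) _ v]
        simplicial_set_face_Suc_degeneracy[OF assms(1) _ v]
      by (cases i) auto
    moreover have "i = 1 - p"
      using that assms(2) by auto
    ultimately show ?thesis
      by simp
  qed
  ultimately show "\<exists>x\<in>X 1. \<forall>i\<le>1. i \<noteq> p \<longrightarrow> d 1 i x = c i"
    by blast
qed

lemma Kan_cond_dim2_iff_BC_cond: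
  assumes "i < j" "j \<le> 2" "p \<le> 2" "p \<noteq> i" "p \<noteq> j"
  shows "Kan_cond X d p 2 \<longleftrightarrow> BC_cond X d i j 2"
proof -
  have horn_faces: "(\<forall>k\<le>2. k \<noteq> p \<longrightarrow> P k) \<longleftrightarrow> P i \<and> P j" for P :: "nat \<Rightarrow> bool"
  proof -
    have "k \<le> 2 \<and> k \<noteq> p \<longleftrightarrow> k = i \<or> k = j" for k :: nat
      using assms by auto
    then show ?thesis
      by metis
  qed
  have horn_pairs: "(\<forall>k l. k < l \<and> l \<le> 2 \<and> k \<noteq> p \<and> l \<noteq> p \<longrightarrow> Q k l) \<longleftrightarrow> Q i j"
    for Q :: "nat \<Rightarrow> nat \<Rightarrow> bool"
  proof -
    have pair_iff: "k < l \<and> l \<le> 2 \<and> k \<noteq> p \<and> l \<noteq> p \<longleftrightarrow> k = i \<and> l = j" for k l :: nat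
      using assms by arith
    show ?thesis
      unfolding pair_iff by simp
  qed
  have "Kan_cond X d p 2 \<longleftrightarrow>
      (\<forall>c. c i \<in> X 1 \<and> c j \<in> X 1 \<and> d 1 i (c j) = d 1 (j - 1) (c i) \<longrightarrow>
        (\<exists>x\<in>X 2. d 2 i x = c i \<and> d 2 j x = c j))"
    unfolding Kan_cond_def horn_faces horn_pairs by simp
  also have "\<dots> \<longleftrightarrow> BC_cond X d i j 2"
    unfolding BC_cond_def
  proof (intro iffI ballI impI allI)
    fix cp cq
    assume fill: "\<forall>c. c i \<in> X 1 \<and> c j \<in> X 1 \<and> d 1 i (c j) = d 1 (j - 1) (c i) \<longrightarrow>
        (\<exists>x\<in>X 2. d 2 i x = c i \<and> d 2 j x = c j)"
      and "cp \<in> X (2 - 1)" "cq \<in> X (2 - 1)" "d (2 - 1) i cq = d (2 - 1) (j - 1) cp"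
    with assms(1) show "\<exists>x\<in>X 2. d 2 i x = cp \<and> d 2 j x = cq"
      using fill[rule_format, of "\<lambda>k. if k = i then cp else cq"] by auto
  qed auto
  finally show ?thesis .
qed

theorem mainTheorem4:
  assumes "simplicial_set X d s"
  shows "(\<forall>n p. 1 \<le> n \<and> n \<le> 2 \<and> p \<le> n \<longrightarrow> Kan_cond X d p n) \<longleftrightarrow>
         (\<forall>n p q. 1 < n \<and> n \<le> 2 \<and> p < q \<and> q \<le> n \<longrightarrow> BC_cond X d p q n)"
proof -
  have Kan_range: "1 \<le> n \<and> n \<le> 2 \<and> p \<le> n \<longleftrightarrow>
      n = 1 \<and> p \<le> 1 \<or> n = 2 \<and> (p = 0 \<or> p = 1 \<or> p = 2)" for n p :: nat
    by auto
  have BC_range: "1 < n \<and> n \<le> 2 \<and> p < q \<and> q \<le> n \<longleftrightarrow>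
      n = 2 \<and> (p = 1 \<and> q = 2 \<or> p = 0 \<and> q = 2 \<or> p = 0 \<and> q = 1)" for n p q :: nat
    by auto
  have "Kan_cond X d 0 2 \<longleftrightarrow> BC_cond X d 1 2 2"
    "Kan_cond X d 1 2 \<longleftrightarrow> BC_cond X d 0 2 2"
    "Kan_cond X d 2 2 \<longleftrightarrow> BC_cond X d 0 1 2"
    by (rule Kan_cond_dim2_iff_BC_cond; simp)+
  then show ?thesis
    unfolding Kan_range BC_range using Kan_cond_dim1[OF assms] by (simp add: all_conj_distrib)
qed

end
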